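(* Let $\mathcal{M}$ be a Riemannian submanifold of a Euclidean space, let $f:\mathcal{M}\times\mathbb{R}^n\to\mathbb{R}$, $\boldsymbol{c}=(c_1,\dots,c_p):\mathcal{M}\times\mathbb{R}^n\to\mathbb{R}^p$ and $\boldsymbol{g}=(g_1,\dots,g_s):\mathbb{R}^n\to\mathbb{R}^s$ be differentiable, and let $(\boldsymbol{x}^*,\boldsymbol{y}^* )$ be feasible, i.e. $\boldsymbol{x}^*\in\mathcal{M}$, $\boldsymbol{c}(\boldsymbol{x}^*,\boldsymbol{y}^* )=\boldsymbol{0}$, $\boldsymbol{g}(\boldsymbol{y}^* )\le\boldsymbol{0}$. Assume the LICQ holds at $\boldsymbol{z}^*=(\boldsymbol{x}^*,\boldsymbol{y}^* )$. Let $\epsilon\ge0$. If $\max\{m_x(\boldsymbol{x}^*,\boldsymbol{y}^* ),m_y(\boldsymbol{x}^*,\boldsymbol{y}^* )\}\le\epsilon$, then $(\boldsymbol{x}^*,\boldsymbol{y}^* )$ is an $\epsilon$-approximate first-order stationary point; and if $m_{KKT}(\boldsymbol{x}^*,\boldsymbol{y}^* )\le\epsilon$, then $(\boldsymbol{x}^*,\boldsymbol{y}^* )$ is an $\epsilon$-approximate first-order KKT point.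
   Context: Write $\mathcal{M}'=\mathcal{M}\times\mathbb{R}^n$ (product Riemannian manifold), $\boldsymbol{z}=(\boldsymbol{x},\boldsymbol{y})$, and $\bar f(\boldsymbol{z})=f(\boldsymbol{x},\boldsymbol{y})$, $\bar c_i(\boldsymbol{z})=c_i(\boldsymbol{x},\boldsymbol{y})$, $\bar g_j(\boldsymbol{z})=g_j(\boldsymbol{y})$. $\operatorname{grad}$ denotes the Riemannian gradient (with respect to $\boldsymbol{x}$ on $\mathcal{M}$ for $f,c_i$; on $\mathcal{M}'$ for $\bar f,\bar c_i,\bar g_j$), $\nabla_y$ the Euclidean gradient in $\boldsymbol{y}$, $\langle\cdot,\cdot\rangle_{\boldsymbol{x}}$ and $\|\cdot\|_{\boldsymbol{x}}$ the Riemannian metric and norm. $\mathcal{A}(\boldsymbol{y})=\{j: g_j(\boldsymbol{y})=0\}$. LICQ at $\boldsymbol{z}$: the vectors $\{\operatorname{grad}\bar c_i(\boldsymbol{z})\}_{i=1}^p\cup\{\operatorname{grad}\bar g_j(\boldsymbol{z})\}_{j\in\mathcal{A}(\boldsymbol{y})}$ are linearly independent in $T_{\boldsymbol{z}}\mathcal{M}'$. Measures: $m_x(\boldsymbol{x},\boldsymbol{y})=|\min\{\langle\operatorname{grad}f(\boldsymbol{x},\boldsymbol{y}),\boldsymbol{d}\rangle_{\boldsymbol{x}}:\boldsymbol{d}\in T_{\boldsymbol{x}}\mathcal{M},\ \langle\operatorname{grad}c_i(\boldsymbol{x},\boldsymbol{y}),\boldsymbol{d}\rangle_{\boldsymbol{x}}=0\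 \forall i,\ \|\boldsymbol{d}\|_{\boldsymbol{x}}\le1\}|$; $m_y(\boldsymbol{x},\boldsymbol{y})=|\min\{\langle\nabla_yf(\boldsymbol{x},\boldsymbol{y}),\boldsymbol{d}\rangle:\boldsymbol{d}\in\mathbb{R}^n,\ \langle\nabla_yc_i(\boldsymbol{x},\boldsymbol{y}),\boldsymbol{d}\rangle=0\ \forall i,\ \langle\nabla g_j(\boldsymbol{y}),\boldsymbol{d}\rangle\le0\ \forall j\in\mathcal{A}(\boldsymbol{y}),\ \|\boldsymbol{d}\|\le1\}|$; $m_{KKT}(\boldsymbol{x},\boldsymbol{y})=|\min\{\langle\operatorname{grad}\bar f(\boldsymbol{z}),\boldsymbol{d}\rangle_{\boldsymbol{z}}:\boldsymbol{d}\in T_{\boldsymbol{z}}\mathcal{M}',\ \langle\operatorname{grad}\bar c_i(\boldsymbol{z}),\boldsymbol{d}\rangle_{\boldsymbol{z}}=0\ \forall i,\ \langle\operatorname{grad}\bar g_j(\boldsymbol{z}),\boldsymbol{d}\rangle_{\boldsymbol{z}}\le0\ \forall j\in\mathcal{A}(\boldsymbol{y}),\ \|\boldsymbol{d}\|_{\boldsymbol{z}}\le1\}|$. A feasible $(\boldsymbol{x}^*,\boldsymbol{y}^* )$ is an $\epsilon$-approximate first-order stationary point if (a) there is $\boldsymbol{\lambda}\in\mathbb{R}^p$ with $\|\operatorname{grad}f(\boldsymbol{x}^*,\boldsymbol{y}^* )+\sum_i\lambda_i\operatorname{grad}c_i(\boldsymbol{x}^*,\boldsymbol{y}^* )\|_{\boldsymbol{x}^*}\le\epsilon$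 and (b) there are $\boldsymbol{\lambda}'\in\mathbb{R}^p$, $\boldsymbol{\mu}\in\mathbb{R}^s_+$ with $\|\nabla_yf+\sum_i\lambda'_i\nabla_yc_i+\sum_j\mu_j\nabla g_j\|\le\epsilon$ at $(\boldsymbol{x}^*,\boldsymbol{y}^* )$ and $\mu_jg_j(\boldsymbol{y}^* )=0$ for all $j$. It is an $\epsilon$-approximate first-order KKT point if there are $\boldsymbol{\lambda}\in\mathbb{R}^p$, $\boldsymbol{\mu}\in\mathbb{R}^s_+$ with $\|\operatorname{grad}\bar f(\boldsymbol{z}^* )+\sum_i\lambda_i\operatorname{grad}\bar c_i(\boldsymbol{z}^* )+\sum_j\mu_j\operatorname{grad}\bar g_j(\boldsymbol{z}^* )\|_{\boldsymbol{z}^*}\le\epsilon$ and $\mu_j\bar g_j(\boldsymbol{z}^* )=0$ for all $j$. *)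

theory Defs
  imports "HOL-Analysis.Analysis"
begin

definition egrad :: "('a::real_inner \<Rightarrow> real) \<Rightarrow> 'a \<Rightarrow> 'a" where
  "egrad F x = (THE v. (F has_derivative (\<lambda>h. v \<bullet> h)) (at x))"

definition submanifold :: "'e::euclidean_space set \<Rightarrow> bool" where
  "submanifold M \<longleftrightarrow>
     (\<forall>x\<in>M. \<exists>U (q::nat) h. open U \<and> x \<in> U \<and>
        (\<forall>i<q. (\<forall>u\<in>U. h i differentiable (at u)) \<and> continuous_on U (egrad (h i))) \<and>
        (\<forall>a. (\<Sum>i<q. a i *\<^sub>R egrad (h i) x) = 0 \<longrightarrow> (\<forall>i<q. a i = 0)) \<and>
        M \<inter> U = {u\<in>U. \<forall>i<q. h i u = 0})"

definition tangent_space :: "'a::real_normed_vector set \<Rightarrow> 'a \<Rightarrow> 'a set" where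
  "tangent_space M x = {v. \<exists>\<gamma> (e::real). e > 0 \<and> \<gamma> 0 = x \<and> (\<forall>t\<in>{-e<..<e}. \<gamma> t \<in> M) \<and>
                            (\<gamma> has_vector_derivative v) (at 0)}"

definition rgrad :: "'a::real_inner set \<Rightarrow> ('a \<Rightarrow> real) \<Rightarrow> 'a \<Rightarrow> 'a" where
  "rgrad M F x = (THE v. v \<in> tangent_space M x \<and>
      (\<forall>d\<in>tangent_space M x. frechet_derivative F (at x) d = v \<bullet> d))"

definition active_set :: "(nat \<Rightarrow> 'b \<Rightarrow> real) \<Rightarrow> nat \<Rightarrow> 'b \<Rightarrow> nat set" where
  "active_set g s y = {j. j < s \<and> g j y = 0}"

definition feasible ::
  "'e::euclidean_space set \<Rightarrow> (nat \<Rightarrow> 'e \<times> (real^'n) \<Rightarrow> real) \<Rightarrow> nat \<Rightarrow>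
   (nat \<Rightarrow> real^'n \<Rightarrow> real) \<Rightarrow> nat \<Rightarrow> 'e \<Rightarrow> real^'n \<Rightarrow> bool" where
  "feasible M c p g s x y \<longleftrightarrow> x \<in> M \<and> (\<forall>i<p. c i (x, y) = 0) \<and> (\<forall>j<s. g j y \<le> 0)"

definition LICQ ::
  "'e::euclidean_space set \<Rightarrow> (nat \<Rightarrow> 'e \<times> (real^'n) \<Rightarrow> real) \<Rightarrow> nat \<Rightarrow>
   (nat \<Rightarrow> real^'n \<Rightarrow> real) \<Rightarrow> nat \<Rightarrow> 'e \<Rightarrow> real^'n \<Rightarrow> bool" where
  "LICQ M c p g s x y \<longleftrightarrow>
     (\<forall>a b. (\<Sum>i<p. a i *\<^sub>R rgrad (M \<times> UNIV) (c i) (x, y))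
          + (\<Sum>j\<in>active_set g s y. b j *\<^sub>R rgrad (M \<times> UNIV) (\<lambda>z. g j (snd z)) (x, y)) = 0
        \<longrightarrow> (\<forall>i<p. a i = 0) \<and> (\<forall>j\<in>active_set g s y. b j = 0))"

definition m_x ::
  "'e::euclidean_space set \<Rightarrow> ('e \<times> (real^'n) \<Rightarrow> real) \<Rightarrow> (nat \<Rightarrow> 'e \<times> (real^'n) \<Rightarrow> real) \<Rightarrow> nat \<Rightarrow>
   'e \<Rightarrow> real^'n \<Rightarrow> real" where
  "m_x M f c p x y = \<bar>Inf {rgrad M (\<lambda>u. f (u, y)) x \<bullet> d | d.
       d \<in> tangent_space M x \<and> (\<forall>i<p. rgrad M (\<lambda>u. c i (u, y)) x \<bullet> d = 0) \<and> norm d \<le> 1}\<bar>"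

definition m_y ::
  "('e::euclidean_space \<times> (real^'n) \<Rightarrow> real) \<Rightarrow> (nat \<Rightarrow> 'e \<times> (real^'n) \<Rightarrow> real) \<Rightarrow> nat \<Rightarrow>
   (nat \<Rightarrow> real^'n \<Rightarrow> real) \<Rightarrow> nat \<Rightarrow> 'e \<Rightarrow> real^'n \<Rightarrow> real" where
  "m_y f c p g s x y = \<bar>Inf {egrad (\<lambda>v. f (x, v)) y \<bullet> d | d.
       (\<forall>i<p. egrad (\<lambda>v. c i (x, v)) y \<bullet> d = 0) \<and>
       (\<forall>j\<in>active_set g s y. egrad (g j) y \<bullet> d \<le> 0) \<and> norm d \<le> 1}\<bar>"

definition m_KKT ::
  "'e::euclidean_space set \<Rightarrow> ('e \<times> (real^'n) \<Rightarrow> real) \<Rightarrow> (nat \<Rightarrow> 'e \<times> (real^'n) \<Rightarrow> real) \<Rightarrow> nat \<Rightarrow>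
   (nat \<Rightarrow> real^'n \<Rightarrow> real) \<Rightarrow> nat \<Rightarrow> 'e \<Rightarrow> real^'n \<Rightarrow> real" where
  "m_KKT M f c p g s x y = \<bar>Inf {rgrad (M \<times> UNIV) f (x, y) \<bullet> d | d.
       d \<in> tangent_space (M \<times> UNIV) (x, y) \<and>
       (\<forall>i<p. rgrad (M \<times> UNIV) (c i) (x, y) \<bullet> d = 0) \<and>
       (\<forall>j\<in>active_set g s y. rgrad (M \<times> UNIV) (\<lambda>z. g j (snd z)) (x, y) \<bullet> d \<le> 0) \<and>
       norm d \<le> 1}\<bar>"

definition eps_stationary ::
  "real \<Rightarrow> 'e::euclidean_space set \<Rightarrow> ('e \<times> (real^'n) \<Rightarrow> real) \<Rightarrow> (nat \<Rightarrow> 'e \<times> (real^'n) \<Rightarrow> real) \<Rightarrow> nat \<Rightarrow>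
   (nat \<Rightarrow> real^'n \<Rightarrow> real) \<Rightarrow> nat \<Rightarrow> 'e \<Rightarrow> real^'n \<Rightarrow> bool" where
  "eps_stationary \<epsilon> M f c p g s x y \<longleftrightarrow> feasible M c p g s x y \<and>
     (\<exists>lam. norm (rgrad M (\<lambda>u. f (u, y)) x + (\<Sum>i<p. lam i *\<^sub>R rgrad M (\<lambda>u. c i (u, y)) x)) \<le> \<epsilon>) \<and>
     (\<exists>lam2 \<mu>. (\<forall>j<s. \<mu> j \<ge> 0) \<and>
        norm (egrad (\<lambda>v. f (x, v)) y + (\<Sum>i<p. lam2 i *\<^sub>R egrad (\<lambda>v. c i (x, v)) y)
              + (\<Sum>j<s. \<mu> j *\<^sub>R egrad (g j) y)) \<le> \<epsilon> \<and>
        (\<forall>j<s. \<mu> j * g j y = 0))"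

definition eps_KKT ::
  "real \<Rightarrow> 'e::euclidean_space set \<Rightarrow> ('e \<times> (real^'n) \<Rightarrow> real) \<Rightarrow> (nat \<Rightarrow> 'e \<times> (real^'n) \<Rightarrow> real) \<Rightarrow> nat \<Rightarrow>
   (nat \<Rightarrow> real^'n \<Rightarrow> real) \<Rightarrow> nat \<Rightarrow> 'e \<Rightarrow> real^'n \<Rightarrow> bool" where
  "eps_KKT \<epsilon> M f c p g s x y \<longleftrightarrow> feasible M c p g s x y \<and>
     (\<exists>lam \<mu>. (\<forall>j<s. \<mu> j \<ge> 0) \<and>
        norm (rgrad (M \<times> UNIV) f (x, y) + (\<Sum>i<p. lam i *\<^sub>R rgrad (M \<times> UNIV) (c i) (x, y))
              + (\<Sum>j<s. \<mu> j *\<^sub>R rgrad (M \<times> UNIV) (\<lambda>z. g j (snd z)) (x, y))) \<le> \<epsilon> \<and>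
        (\<forall>j<s. \<mu> j * g j y = 0))"

end

theory Submission
  imports Defs
begin

text \<open>
  For a closed convex cone \<open>K\<close> inside a subspace \<open>T\<close> and \<open>v \<in> T\<close>, projecting \<open>-v\<close> onto \<open>K\<close>
  (Moreau decomposition) yields \<open>k \<in> K\<close> and a unit-bounded direction \<open>d \<in> T\<close> in the polar
  cone of \<open>K\<close> with \<open>v \<bullet> d = - norm (v + k)\<close>. Applied to the cone spanned by \<open>\<plusminus>grad c\<^sub>i\<close>
  and the active \<open>grad g\<^sub>j\<close>, the direction \<open>d\<close> is admissible for the measure, so
  \<open>norm (v + k) \<le> \<epsilon>\<close>, and \<open>k\<close> is a combination with multipliers of the required signs.
  The only geometric input is that tangent spaces of a submanifold, and hence of
  \<open>M \<times> \<real>\<^sup>n\<close>, are linear subspaces, which follows from the inverse function theorem.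
\<close>

section \<open>Euclidean and Riemannian gradients\<close>

lemma egrad_eqI:
  assumes "(F has_derivative (\<lambda>h. v \<bullet> h)) (at x)"
  shows "egrad F x = v"
  unfolding egrad_def
proof (rule the_equality)
  fix w assume "(F has_derivative (\<lambda>h. w \<bullet> h)) (at x)"
  then have "(\<lambda>h. w \<bullet> h) = (\<lambda>h. v \<bullet> h)"
    using assms has_derivative_unique by blast
  then have "(w - v) \<bullet> (w - v) = 0"
    by (metis inner_diff_left diff_self)
  then show "w = v" by simp
qed (fact assms)

lemma linear_functional_eq_inner:
  fixes D :: "'a::euclidean_space \<Rightarrow> real"
  assumes "linear D"
  shows "D h = adjoint D 1 \<bullet> h"
  using adjoint_works[OF assms, of h 1] by (simp add: inner_commute)

lemma has_derivative_egrad: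
  fixes F :: "'a::euclidean_space \<Rightarrow> real"
  assumes "F differentiable (at x)"
  shows "(F has_derivative (\<lambda>h. egrad F x \<bullet> h)) (at x)"
proof -
  obtain D where D: "(F has_derivative D) (at x)"
    using assms by (auto simp: differentiable_def)
  then have "D = (\<lambda>h. adjoint D 1 \<bullet> h)"
    using linear_functional_eq_inner has_derivative_linear by blast
  with D show ?thesis
    using egrad_eqI by metis
qed

lemma Riesz_representation_subspace:
  fixes T :: "'a::euclidean_space set"
  assumes T: "subspace T" and D: "linear D"
  shows "\<exists>!v. v \<in> T \<and> (\<forall>d\<in>T. D d = v \<bullet> d)"
proof -
  obtain y z where y: "y \<in> span T" and z: "\<And>w. w \<in> span T \<Longrightarrow> orthogonal z w"
    and yz: "adjoint D 1 = y + z"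
    using orthogonal_subspace_decomp_exists by metis
  have yT: "y \<in> T" using y T by (metis span_eq_iff)
  have rep: "D d = y \<bullet> d" if "d \<in> T" for d
    using that z linear_functional_eq_inner[OF D, of d]
    by (simp add: yz inner_add_left orthogonal_def span_base)
  show ?thesis
  proof (rule ex1I[of _ y])
    fix v assume v: "v \<in> T \<and> (\<forall>d\<in>T. D d = v \<bullet> d)"
    then have "v - y \<in> T" using yT T by (simp add: subspace_diff)
    then have "(v - y) \<bullet> (v - y) = 0"
      using v rep by (simp add: inner_diff_left)
    then show "v = y" by simp
  qed (use yT rep in blast)
qed

lemma rgrad_in_tangent_space:
  fixes F :: "'a::euclidean_space \<Rightarrow> real"
  assumes "subspace (tangent_space S z)" and "F differentiable (at z)"
  shows "rgrad S F z \<in> tangent_space S z"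
proof -
  have "linear (frechet_derivative F (at z))"
    using assms(2) frechet_derivative_works has_derivative_linear by blast
  from theI'[OF Riesz_representation_subspace[OF assms(1) this]] show ?thesis
    unfolding rgrad_def by blast
qed

lemma differentiable_comp_snd:
  fixes G :: "'b::real_normed_vector \<Rightarrow> real"
  assumes "G differentiable (at (snd z))"
  shows "(\<lambda>w. G (snd w)) differentiable (at (z :: 'a::real_normed_vector \<times> 'b))"
  using differentiable_compose[of G snd z UNIV, OF assms]
  by (simp add: bounded_linear_imp_differentiable[OF bounded_linear_snd])

lemma differentiable_comp_Pair:
  fixes F :: "'a::real_normed_vector \<times> 'b::real_normed_vector \<Rightarrow> real"
  assumes "F differentiable (at (x, y))"
  shows "(\<lambda>u. F (u, y)) differentiable (at x)"
  by (rule differentiable_compose[of F "\<lambda>u. (u, y)", OF assms])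
    (auto intro!: derivative_eq_intros simp: differentiable_def)

section \<open>Tangent spaces of submanifolds\<close>

lemma tangent_space_Times_UNIV:
  fixes M :: "'a::real_normed_vector set"
  shows "tangent_space (M \<times> (UNIV::'b::real_normed_vector set)) (x, y) = tangent_space M x \<times> UNIV"
proof safe
  fix a b assume "(a, b) \<in> tangent_space (M \<times> (UNIV::'b set)) (x, y)"
  then obtain \<gamma> e where e: "e > 0" "\<gamma> 0 = (x, y)" "\<forall>t\<in>{-e<..<e}. \<gamma> t \<in> M \<times> UNIV"
    and \<gamma>: "(\<gamma> has_vector_derivative (a, b)) (at 0)"
    unfolding tangent_space_def by blast
  have "((\<lambda>t. fst (\<gamma> t)) has_vector_derivative a) (at 0)"
    using \<gamma> unfolding has_vector_derivative_def by (auto intro!: derivative_eq_intros)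
  with e show "a \<in> tangent_space M x"
    unfolding tangent_space_def
    by (intro CollectI exI[of _ "\<lambda>t. fst (\<gamma> t)"] exI[of _ e]) (auto simp: mem_Times_iff)
next
  fix a b assume "a \<in> tangent_space M x"
  then obtain \<gamma> e where e: "e > 0" "\<gamma> 0 = x" "\<forall>t\<in>{-e<..<e}. \<gamma> t \<in> M"
    and \<gamma>: "(\<gamma> has_vector_derivative a) (at 0)"
    unfolding tangent_space_def by blast
  have "((\<lambda>t. (\<gamma> t, y + t *\<^sub>R b)) has_vector_derivative (a, b)) (at 0)"
    using \<gamma> by (auto intro!: derivative_eq_intros)
  with e show "(a, b) \<in> tangent_space (M \<times> (UNIV::'b set)) (x, y)"
    unfolding tangent_space_def
    by (intro CollectI exI[of _ "\<lambda>t. (\<gamma> t, y + t *\<^sub>R b)"] exI[of _ e]) auto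
qed simp

lemma tangent_space_orthogonal_egrad:
  fixes M :: "'a::euclidean_space set"
  assumes "open U" "x \<in> U" and h: "h differentiable (at x)" and "\<forall>u\<in>M \<inter> U. h u = 0"
    and v: "v \<in> tangent_space M x"
  shows "egrad h x \<bullet> v = 0"
proof -
  obtain \<gamma> e where e: "e > 0" "\<gamma> 0 = x" "\<forall>t\<in>{-e<..<e}. \<gamma> t \<in> M"
    and \<gamma>: "(\<gamma> has_vector_derivative v) (at 0)"
    using v unfolding tangent_space_def by blast
  have "continuous (at 0) \<gamma>"
    using \<gamma> by (rule has_vector_derivative_continuous)
  then obtain \<delta> where "\<delta> > 0" and \<delta>: "\<And>t. dist t 0 < \<delta> \<Longrightarrow> \<gamma> t \<in> U"
    using assms(1,2) e(2) unfolding continuous_at_eps_delta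
    by (metis open_contains_ball_eq mem_ball subsetD dist_commute)
  have vanish: "h (\<gamma> t) = 0" if "t \<in> ball 0 (min \<delta> e)" for t
    using that \<delta> e(3) assms(4) by (auto simp: dist_real_def abs_less_iff)
  have "(h has_derivative (\<lambda>k. egrad h x \<bullet> k)) (at (\<gamma> 0))"
    using has_derivative_egrad[OF h] e(2) by simp
  from has_derivative_compose[OF \<gamma>[unfolded has_vector_derivative_def] this]
  have "((\<lambda>t. h (\<gamma> t)) has_derivative (\<lambda>t. egrad h x \<bullet> (t *\<^sub>R v))) (at 0)" .
  then have "((\<lambda>t. 0::real) has_derivative (\<lambda>t. egrad h x \<bullet> (t *\<^sub>R v))) (at 0)"
    by (rule has_derivative_transform_within_open[where s="ball 0 (min \<delta> e)"])
      (use \<open>\<delta> > 0\<close> e(1) vanish in auto)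
  then have "(\<lambda>t. egrad h x \<bullet> (t *\<^sub>R v)) = (\<lambda>t. 0)"
    using has_derivative_unique has_derivative_const by blast
  then show ?thesis by (metis scaleR_one)
qed

lemma local_inverse_of_injective_derivative:
  fixes F :: "'a::euclidean_space \<Rightarrow> 'a" and F' :: "'a \<Rightarrow> 'a \<Rightarrow>\<^sub>L 'a"
  assumes U: "open U" "x \<in> U"
    and F: "\<And>u. u \<in> U \<Longrightarrow> (F has_derivative blinfun_apply (F' u)) (at u)"
    and F': "continuous_on U F'" and inj: "inj (blinfun_apply (F' x))"
  obtains V G where "open V" "F x \<in> V" "G (F x) = x" "\<And>y. y \<in> V \<Longrightarrow> G y \<in> U \<and> F (G y) = y"
    "(G has_derivative inv (blinfun_apply (F' x))) (at (F x))"
proof -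
  obtain L where L: "linear L" "L \<circ> blinfun_apply (F' x) = id"
    using linear_injective_left_inverse[OF bounded_linear.linear[OF blinfun.bounded_linear_right] inj]
    by blast
  have "Blinfun L o\<^sub>L F' x = id_blinfun"
    using L by (intro blinfun_eqI)
      (auto simp: bounded_linear_Blinfun_apply linear_conv_bounded_linear pointfree_idE)
  then obtain U' V G G' where "U' \<subseteq> U" "x \<in> U'" "open V" "F x \<in> V"
    and hom: "homeomorphism U' V F G"
    and G: "\<And>y. y \<in> V \<Longrightarrow> (G has_derivative (G' y)) (at y)"
    and G': "\<And>y. y \<in> V \<Longrightarrow> G' y = inv (blinfun_apply (F' (G y)))"
    using inverse_function_theorem[OF U(1) F F' U(2)] by metis
  have "G (F x) = x"
    using hom \<open>x \<in> U'\<close> by (rule homeomorphism_apply1)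
  moreover have "G y \<in> U \<and> F (G y) = y" if "y \<in> V" for y
    using homeomorphism_image2[OF hom] homeomorphism_apply2[OF hom that] \<open>U' \<subseteq> U\<close> that by auto
  ultimately show thesis
    using that \<open>open V\<close> \<open>F x \<in> V\<close> G[OF \<open>F x \<in> V\<close>] G'[OF \<open>F x \<in> V\<close>] by simp
qed

lemma curve_through_local_inverse:
  fixes F :: "'a::euclidean_space \<Rightarrow> 'a" and F' :: "'a \<Rightarrow> 'a \<Rightarrow>\<^sub>L 'a"
  assumes U: "open U" "x \<in> U"
    and F: "\<And>u. u \<in> U \<Longrightarrow> (F has_derivative blinfun_apply (F' u)) (at u)"
    and F': "continuous_on U F'" and inj: "inj (blinfun_apply (F' x))"
  obtains \<gamma> e where "e > 0" "\<gamma> 0 = x"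
    "\<And>t. t \<in> {-e<..<e} \<Longrightarrow> \<gamma> t \<in> U \<and> F (\<gamma> t) = F x + t *\<^sub>R F' x v"
    "(\<gamma> has_vector_derivative v) (at 0)"
proof -
  obtain V G where "open V" "F x \<in> V" "G (F x) = x"
    and G: "\<And>y. y \<in> V \<Longrightarrow> G y \<in> U \<and> F (G y) = y"
    and G': "(G has_derivative inv (blinfun_apply (F' x))) (at (F x))"
    using local_inverse_of_injective_derivative[OF U F F' inj] by blast
  define z where "z = F' x v"
  obtain r where "r > 0" and r: "ball (F x) r \<subseteq> V"
    using \<open>open V\<close> \<open>F x \<in> V\<close> open_contains_ball by blast
  define e where "e = r / (norm z + 1)"
  have line_in_V: "F x + t *\<^sub>R z \<in> V" if "t \<in> {-e<..<e}" for t
  proof -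
    have "\<bar>t\<bar> < r / (norm z + 1)"
      using that by (auto simp: e_def)
    then have "\<bar>t\<bar> * (norm z + 1) < r"
      by (simp add: pos_less_divide_eq add_nonneg_pos)
    moreover have "\<bar>t\<bar> * norm z \<le> \<bar>t\<bar> * (norm z + 1)"
      by (simp add: mult_left_mono)
    ultimately show ?thesis
      using r by (auto simp: dist_norm)
  qed
  show thesis
  proof
    show "e > 0"
      using \<open>r > 0\<close> by (simp add: e_def add_nonneg_pos)
    show "G (F x + 0 *\<^sub>R z) = x"
      using \<open>G (F x) = x\<close> by simp
    show "G (F x + t *\<^sub>R z) \<in> U \<and> F (G (F x + t *\<^sub>R z)) = F x + t *\<^sub>R F' x v"
      if "t \<in> {-e<..<e}" for t
      using G[OF line_in_V[OF that]] by (simp add: z_def)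
    have "((\<lambda>t. F x + t *\<^sub>R z) has_derivative (\<lambda>t. t *\<^sub>R z)) (at 0)"
      by (auto intro!: derivative_eq_intros)
    with G' have "((\<lambda>t. G (F x + t *\<^sub>R z))
        has_derivative (\<lambda>t. inv (blinfun_apply (F' x)) (t *\<^sub>R z))) (at 0)"
      using has_derivative_compose[of "\<lambda>t. F x + t *\<^sub>R z"] by fastforce
    moreover have "inv (blinfun_apply (F' x)) (t *\<^sub>R z) = t *\<^sub>R v" for t
      using inj by (simp add: z_def blinfun.scaleR_right[symmetric] inv_f_f del: blinfun.scaleR_right)
    ultimately show "((\<lambda>t. G (F x + t *\<^sub>R z)) has_vector_derivative v) (at 0)"
      by (simp add: has_vector_derivative_def)
  qed
qed

lemma sum_outer_products_eq_0_imp_eq_0: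
  fixes g :: "'i \<Rightarrow> 'a::real_inner"
  assumes "finite I" "finite B" and span: "\<And>k. \<forall>i\<in>I. g i \<bullet> k = 0 \<Longrightarrow> k \<in> span B"
    and eq_0: "(\<Sum>i\<in>I. (g i \<bullet> k) *\<^sub>R g i) + (\<Sum>b\<in>B. (b \<bullet> k) *\<^sub>R b) = 0"
  shows "k = 0"
proof -
  have "(\<Sum>i\<in>I. (g i \<bullet> k)\<^sup>2) + (\<Sum>b\<in>B. (b \<bullet> k)\<^sup>2) = 0"
    using arg_cong[OF eq_0, of "\<lambda>w. k \<bullet> w"]
    by (simp add: inner_add_right inner_sum_right power2_eq_square inner_commute[of k])
  moreover have "(\<Sum>i\<in>I. (g i \<bullet> k)\<^sup>2) \<ge> 0" "(\<Sum>b\<in>B. (b \<bullet> k)\<^sup>2) \<ge> 0"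
    by (simp_all add: sum_nonneg)
  ultimately have "(\<Sum>i\<in>I. (g i \<bullet> k)\<^sup>2) = 0" "(\<Sum>b\<in>B. (b \<bullet> k)\<^sup>2) = 0"
    by linarith+
  then have "\<forall>i\<in>I. g i \<bullet> k = 0" "\<forall>b\<in>B. b \<bullet> k = 0"
    using assms(1,2) by (simp_all add: sum_nonneg_eq_0_iff)
  then have "orthogonal k k"
    using span orthogonal_to_span[of k B k] by (simp add: orthogonal_def inner_commute)
  then show "k = 0" by (simp add: orthogonal_def)
qed

lemma complementary_operator_exists:
  fixes g :: "'i \<Rightarrow> 'a::euclidean_space"
  assumes "finite I"
  obtains P where "bounded_linear P" "\<And>i k. i \<in> I \<Longrightarrow> g i \<bullet> P k = 0"
    "\<And>k. (\<Sum>i\<in>I. (g i \<bullet> k) *\<^sub>R g i) + P k = 0 \<Longrightarrow> k = 0"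
proof -
  define N where "N = {w. \<forall>i\<in>I. g i \<bullet> w = 0}"
  have "subspace N"
    unfolding N_def subspace_def by (auto simp: inner_add_right)
  then obtain B where "independent B" "span B = N"
    using orthogonal_basis_subspace by metis
  then have "finite B"
    using finiteI_independent by blast
  define P where "P k = (\<Sum>b\<in>B. (b \<bullet> k) *\<^sub>R b)" for k
  show thesis
  proof
    show "bounded_linear P"
      unfolding P_def
      by (intro bounded_linear_sum
          bounded_linear_compose[OF bounded_linear_scaleR_left bounded_linear_inner_right])
    have "P k \<in> span B" for k
      unfolding P_def by (intro span_sum span_mul span_base)
    with \<open>span B = N\<close> show "g i \<bullet> P k = 0" if "i \<in> I" for i k
      using that by (auto simp: N_def)
    show "k = 0" if "(\<Sum>i\<in>I. (g i \<bullet> k) *\<^sub>R g i) + P k = 0" for k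
      using sum_outer_products_eq_0_imp_eq_0[OF \<open>finite I\<close> \<open>finite B\<close> _ that[unfolded P_def]]
        \<open>span B = N\<close> by (auto simp: N_def)
  qed
qed

lemma has_derivative_sum_scaleR_egrad:
  fixes h :: "'i \<Rightarrow> 'a::euclidean_space \<Rightarrow> real"
  assumes "finite I" "\<And>i. i \<in> I \<Longrightarrow> h i differentiable (at u)"
  shows "((\<lambda>u. \<Sum>i\<in>I. h i u *\<^sub>R g i) has_derivative (\<lambda>k. \<Sum>i\<in>I. (egrad (h i) u \<bullet> k) *\<^sub>R g i)) (at u)"
  using assms has_derivative_egrad by (intro has_derivative_sum has_derivative_scaleR_left) auto

lemma chart_curve_exists:
  fixes h :: "nat \<Rightarrow> 'a::euclidean_space \<Rightarrow> real" and g :: "nat \<Rightarrow> 'a"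
  assumes U: "open U" "x \<in> U"
    and h: "\<forall>i<q. (\<forall>u\<in>U. h i differentiable (at u)) \<and> continuous_on U (egrad (h i))"
    and P: "bounded_linear P"
    and inj: "\<And>k. (\<Sum>i<q. (egrad (h i) x \<bullet> k) *\<^sub>R g i) + P k = 0 \<Longrightarrow> k = 0"
  obtains \<gamma> e where "e > 0" "\<gamma> 0 = x" "(\<gamma> has_vector_derivative v) (at 0)"
    "\<And>t. t \<in> {-e<..<e} \<Longrightarrow> \<gamma> t \<in> U \<and>
       (\<Sum>i<q. h i (\<gamma> t) *\<^sub>R g i) + P (\<gamma> t - x) =
       (\<Sum>i<q. h i x *\<^sub>R g i) + t *\<^sub>R ((\<Sum>i<q. (egrad (h i) x \<bullet> v) *\<^sub>R g i) + P v)"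
proof -
  define F where "F u = (\<Sum>i<q. h i u *\<^sub>R g i) + P (u - x)" for u
  define F' where "F' u = Blinfun (\<lambda>k. (\<Sum>i<q. (egrad (h i) u \<bullet> k) *\<^sub>R g i) + P k)" for u
  have F'_apply: "blinfun_apply (F' u) k = (\<Sum>i<q. (egrad (h i) u \<bullet> k) *\<^sub>R g i) + P k" for u k
    unfolding F'_def using P
    by (subst bounded_linear_Blinfun_apply)
      (auto intro!: bounded_linear_add bounded_linear_sum
        bounded_linear_compose[OF bounded_linear_scaleR_left bounded_linear_inner_right])
  have "(F has_derivative blinfun_apply (F' u)) (at u)" if "u \<in> U" for u
  proof -
    have "((\<lambda>u. u - x) has_derivative (\<lambda>k. k)) (at u)"
      by (auto intro!: derivative_eq_intros)
    from bounded_linear.has_derivative[OF P this]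
    have "((\<lambda>u. P (u - x)) has_derivative P) (at u)" .
    then show ?thesis
      unfolding F_def F'_apply[abs_def] using h that
      by (intro has_derivative_add has_derivative_sum_scaleR_egrad) auto
  qed
  moreover have "continuous_on U F'"
  proof (rule continuous_on_blinfun_componentwise)
    fix b :: 'a
    show "continuous_on U (\<lambda>u. blinfun_apply (F' u) b)"
      unfolding F'_apply using h by (intro continuous_intros) auto
  qed
  moreover have "inj (blinfun_apply (F' x))"
    unfolding linear_injective_0[OF bounded_linear.linear[OF blinfun.bounded_linear_right]] F'_apply
    using inj by blast
  ultimately obtain \<gamma> e where "e > 0" "\<gamma> 0 = x"
    and \<gamma>: "\<And>t. t \<in> {-e<..<e} \<Longrightarrow> \<gamma> t \<in> U \<and> F (\<gamma> t) = F x + t *\<^sub>R F' x v"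
    and "(\<gamma> has_vector_derivative v) (at 0)"
    using curve_through_local_inverse[OF U, where v=v] by blast
  show thesis
  proof (rule that)
    fix t assume "t \<in> {-e<..<e}"
    with \<gamma> show "\<gamma> t \<in> U \<and> (\<Sum>i<q. h i (\<gamma> t) *\<^sub>R g i) + P (\<gamma> t - x) =
       (\<Sum>i<q. h i x *\<^sub>R g i) + t *\<^sub>R ((\<Sum>i<q. (egrad (h i) x \<bullet> v) *\<^sub>R g i) + P v)"
      by (simp add: F_def F'_apply linear_0[OF bounded_linear.linear[OF P]])
  qed fact+
qed

lemma kernel_subset_tangent_space:
  fixes M :: "'a::euclidean_space set" and h :: "nat \<Rightarrow> 'a \<Rightarrow> real"
  assumes U: "open U" "x \<in> U" and "x \<in> M"
    and h: "\<forall>i<q. (\<forall>u\<in>U. h i differentiable (at u)) \<and> continuous_on U (egrad (h i))"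
    and indep: "\<forall>a. (\<Sum>i<q. a i *\<^sub>R egrad (h i) x) = 0 \<longrightarrow> (\<forall>i<q. a i = 0)"
    and MU: "M \<inter> U = {u\<in>U. \<forall>i<q. h i u = 0}"
    and v: "\<forall>i<q. egrad (h i) x \<bullet> v = 0"
  shows "v \<in> tangent_space M x"
proof -
  obtain P where P: "bounded_linear P" and PN: "\<And>i k. i < q \<Longrightarrow> egrad (h i) x \<bullet> P k = 0"
    and inj: "\<And>k. (\<Sum>i<q. (egrad (h i) x \<bullet> k) *\<^sub>R egrad (h i) x) + P k = 0 \<Longrightarrow> k = 0"
    using complementary_operator_exists[of "{..<q}" "\<lambda>i. egrad (h i) x"] by auto
  text \<open>In the chart \<open>u \<mapsto> (\<Sum>i<q. h i u *\<^sub>R egrad (h i) x) + P (u - x)\<close> the first summand is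
    orthogonal to the range of \<open>P\<close>, so the chart maps a point of \<open>U\<close> into that range exactly
    when all \<open>h i\<close> vanish there, that is, when the point lies on \<open>M\<close>.\<close>
  obtain \<gamma> e where "e > 0" "\<gamma> 0 = x" "(\<gamma> has_vector_derivative v) (at 0)"
    and \<gamma>: "\<And>t. t \<in> {-e<..<e} \<Longrightarrow> \<gamma> t \<in> U \<and>
       (\<Sum>i<q. h i (\<gamma> t) *\<^sub>R egrad (h i) x) + P (\<gamma> t - x) =
       (\<Sum>i<q. h i x *\<^sub>R egrad (h i) x) + t *\<^sub>R ((\<Sum>i<q. (egrad (h i) x \<bullet> v) *\<^sub>R egrad (h i) x) + P v)"
    using chart_curve_exists[where g="\<lambda>i. egrad (h i) x" and v=v, OF U h P inj] by blast
  have "\<forall>i<q. h i x = 0"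
    using \<open>x \<in> M\<close> U(2) MU by blast
  have "\<gamma> t \<in> M" if "t \<in> {-e<..<e}" for t
  proof -
    define \<rho> where "\<rho> = (\<Sum>i<q. h i (\<gamma> t) *\<^sub>R egrad (h i) x)"
    have "\<rho> = t *\<^sub>R P v - P (\<gamma> t - x)"
      using \<gamma>[OF that] v \<open>\<forall>i<q. h i x = 0\<close> by (simp add: \<rho>_def algebra_simps)
    then have "egrad (h i) x \<bullet> \<rho> = 0" if "i < q" for i
      using PN[OF that] by (simp add: inner_diff_right)
    then have "\<rho> \<bullet> \<rho> = 0"
      by (simp add: \<rho>_def inner_sum_left)
    then have "\<forall>i<q. h i (\<gamma> t) = 0"
      using indep[rule_format, of "\<lambda>i. h i (\<gamma> t)"] by (simp add: \<rho>_def)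
    then show ?thesis
      using \<gamma>[OF that] MU by blast
  qed
  with \<open>e > 0\<close> \<open>\<gamma> 0 = x\<close> \<open>(\<gamma> has_vector_derivative v) (at 0)\<close> show ?thesis
    unfolding tangent_space_def by blast
qed

lemma subspace_tangent_space:
  fixes M :: "'a::euclidean_space set"
  assumes "submanifold M" "x \<in> M"
  shows "subspace (tangent_space M x)"
proof -
  obtain U q h where U: "open U" "x \<in> U"
    and h: "\<forall>i<(q::nat). (\<forall>u\<in>U. h i differentiable (at u)) \<and> continuous_on U (egrad (h i))"
    and indep: "\<forall>a. (\<Sum>i<q. a i *\<^sub>R egrad (h i) x) = 0 \<longrightarrow> (\<forall>i<q. a i = 0)"
    and MU: "M \<inter> U = {u\<in>U. \<forall>i<q. h i u = 0}"
    using assms(1)[unfolded submanifold_def, rule_format, OF assms(2)] by blast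
  have "tangent_space M x = {v. \<forall>i<q. egrad (h i) x \<bullet> v = 0}"
  proof (intro subset_antisym subsetI CollectI allI impI)
    fix v i assume "v \<in> tangent_space M x" "i < q"
    moreover from \<open>i < q\<close> have "h i differentiable (at x)" "\<forall>u\<in>M \<inter> U. h i u = 0"
      using h U(2) MU by auto
    ultimately show "egrad (h i) x \<bullet> v = 0"
      using tangent_space_orthogonal_egrad[OF U] by blast
  next
    fix v assume "v \<in> {v. \<forall>i<q. egrad (h i) x \<bullet> v = 0}"
    then show "v \<in> tangent_space M x"
      using kernel_subset_tangent_space[OF U assms(2) h indep MU] by simp
  qed
  then show ?thesis
    by (simp add: subspace_def inner_add_right)
qed

section \<open>Multipliers from the measures\<close>

lemma convex_cone_closest_point:
  fixes K :: "'a::euclidean_space set"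
  assumes "closed K" "convex_cone K"
  shows "(a - closest_point K a) \<bullet> closest_point K a = 0"
    and "x \<in> K \<Longrightarrow> (a - closest_point K a) \<bullet> x \<le> 0"
proof -
  let ?k = "closest_point K a"
  have "convex K" "0 \<in> K"
    using assms(2) by (auto simp: convex_cone_def convex_cone_contains_0)
  then have dot: "(a - ?k) \<bullet> (y - ?k) \<le> 0" if "y \<in> K" for y
    using closest_point_dot[OF _ assms(1) that] by blast
  have "?k \<in> K"
    using assms(1) \<open>0 \<in> K\<close> by (auto intro: closest_point_in_set)
  then have "2 *\<^sub>R ?k \<in> K"
    using assms(2) by (simp add: convex_cone_iff)
  from dot[OF this] dot[OF \<open>0 \<in> K\<close>] show "(a - ?k) \<bullet> ?k = 0"
    by (simp add: inner_diff_right algebra_simps)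
  with dot show "x \<in> K \<Longrightarrow> (a - ?k) \<bullet> x \<le> 0"
    by (fastforce simp: inner_diff_right)
qed

lemma exists_polar_direction:
  fixes K :: "'a::euclidean_space set"
  assumes "closed K" "convex_cone K" "subspace T" "K \<subseteq> T" "v \<in> T"
  obtains k d where "k \<in> K" "d \<in> T" "norm d \<le> 1" "\<forall>x\<in>K. x \<bullet> d \<le> 0" "v \<bullet> d = - norm (v + k)"
proof
  let ?k = "closest_point K (- v)"
  define e where "e = - v - ?k"
  text \<open>For \<open>e = 0\<close> the direction \<open>(1 / norm e) *\<^sub>R e\<close> is \<open>0\<close>, as \<open>1 / 0 = 0\<close>.\<close>
  show "?k \<in> K"
    using assms(1,2) by (auto intro: closest_point_in_set dest: convex_cone_nonempty)
  then show "(1 / norm e) *\<^sub>R e \<in> T"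
    using assms(3-5) by (auto simp: e_def intro!: subspace_mul subspace_diff subspace_neg)
  show "norm ((1 / norm e) *\<^sub>R e) \<le> 1"
    by simp
  show "\<forall>x\<in>K. x \<bullet> ((1 / norm e) *\<^sub>R e) \<le> 0"
    using convex_cone_closest_point(2)[OF assms(1,2), of _ "- v"]
    by (simp add: e_def inner_commute divide_nonpos_nonneg)
  have "v \<bullet> e = - (e \<bullet> e)"
    using convex_cone_closest_point(1)[OF assms(1,2), of "- v"]
    by (simp add: e_def inner_diff_right inner_diff_left inner_commute algebra_simps)
  also have "\<dots> = - (norm e)\<^sup>2"
    by (simp add: power2_norm_eq_inner)
  finally have "v \<bullet> ((1 / norm e) *\<^sub>R e) = - norm e"
    by (simp add: power2_eq_square)
  moreover have "v + ?k = - e"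
    by (simp add: e_def)
  ultimately show "v \<bullet> ((1 / norm e) *\<^sub>R e) = - norm (v + ?k)"
    by simp
qed

definition multiplier_combinations ::
    "'i set \<Rightarrow> ('i \<Rightarrow> 'a::real_vector) \<Rightarrow> 'j set \<Rightarrow> ('j \<Rightarrow> 'a) \<Rightarrow> 'a set" where
  "multiplier_combinations I w A u =
     {(\<Sum>i\<in>I. a i *\<^sub>R w i) + (\<Sum>j\<in>A. b j *\<^sub>R u j) | a b. \<forall>j\<in>A. 0 \<le> b j}"

lemma convex_cone_multiplier_combinations: "convex_cone (multiplier_combinations I w A u)"
  unfolding convex_cone_iff
proof (intro conjI ballI allI impI)
  show "0 \<in> multiplier_combinations I w A u"
    unfolding multiplier_combinations_def by (intro CollectI exI[of _ "\<lambda>_. 0"]) simp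
next
  fix x y assume "x \<in> multiplier_combinations I w A u" "y \<in> multiplier_combinations I w A u"
  then obtain a b a' b' where "\<forall>j\<in>A. 0 \<le> b j" "\<forall>j\<in>A. 0 \<le> b' j"
    and "x = (\<Sum>i\<in>I. a i *\<^sub>R w i) + (\<Sum>j\<in>A. b j *\<^sub>R u j)"
    and "y = (\<Sum>i\<in>I. a' i *\<^sub>R w i) + (\<Sum>j\<in>A. b' j *\<^sub>R u j)"
    unfolding multiplier_combinations_def by blast
  then show "x + y \<in> multiplier_combinations I w A u"
    unfolding multiplier_combinations_def
    by (intro CollectI exI[of _ "\<lambda>i. a i + a' i"] exI[of _ "\<lambda>j. b j + b' j"])
      (simp add: scaleR_add_left sum.distrib add_ac)
next
  fix x and c :: real assume "x \<in> multiplier_combinations I w A u" "0 \<le> c"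
  then obtain a b where "\<forall>j\<in>A. 0 \<le> b j" "x = (\<Sum>i\<in>I. a i *\<^sub>R w i) + (\<Sum>j\<in>A. b j *\<^sub>R u j)"
    unfolding multiplier_combinations_def by blast
  with \<open>0 \<le> c\<close> show "c *\<^sub>R x \<in> multiplier_combinations I w A u"
    unfolding multiplier_combinations_def
    by (intro CollectI exI[of _ "\<lambda>i. c * a i"] exI[of _ "\<lambda>j. c * b j"])
      (simp add: scaleR_add_right scaleR_sum_right)
qed

lemma convex_cone_hull_subset_multiplier_combinations:
  fixes w :: "'i \<Rightarrow> 'a::real_vector" and u :: "'j \<Rightarrow> 'a"
  assumes "finite I" "finite A"
  shows "convex_cone hull (w ` I \<union> (\<lambda>i. - w i) ` I \<union> u ` A) \<subseteq> multiplier_combinations I w A u"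
proof (rule hull_minimal)
  have comb: "(\<Sum>i\<in>I. a i *\<^sub>R w i) + (\<Sum>j\<in>A. b j *\<^sub>R u j) \<in> multiplier_combinations I w A u"
    if "\<forall>j\<in>A. 0 \<le> b j" for a b
    unfolding multiplier_combinations_def using that by blast
  have delta: "(\<Sum>k\<in>S. (if k = i then c else 0) *\<^sub>R f k) = c *\<^sub>R f i"
    if "finite S" "i \<in> S" for S i c and f :: "_ \<Rightarrow> 'a"
    using that by (simp add: if_distrib[of "\<lambda>a. a *\<^sub>R _"] cong: if_cong)
  have "w i \<in> multiplier_combinations I w A u" "- w i \<in> multiplier_combinations I w A u"
    if "i \<in> I" for i
    using comb[of "\<lambda>_. 0" "\<lambda>k. if k = i then 1 else 0"]
      comb[of "\<lambda>_. 0" "\<lambda>k. if k = i then -1 else 0"] that assms(1) by (simp_all add: delta)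
  moreover have "u j \<in> multiplier_combinations I w A u" if "j \<in> A" for j
    using comb[of "\<lambda>k. if k = j then 1 else 0" "\<lambda>_. 0"] that assms(2) by (simp add: delta)
  ultimately show "w ` I \<union> (\<lambda>i. - w i) ` I \<union> u ` A \<subseteq> multiplier_combinations I w A u"
    by blast
qed (rule convex_cone_multiplier_combinations)

lemma bdd_below_inner_unit_ball:
  assumes "\<And>d. P d \<Longrightarrow> norm d \<le> 1"
  shows "bdd_below {v \<bullet> d | d. P d}"
proof (rule bdd_belowI)
  fix r assume "r \<in> {v \<bullet> d | d. P d}"
  then obtain d where "r = v \<bullet> d" "norm d \<le> 1"
    using assms by blast
  then show "- norm v \<le> r"
    using norm_cauchy_schwarz[of "- v" d] mult_left_le[of "norm d" "norm v"] by simp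
qed

lemma Farkas_multipliers:
  fixes v :: "'a::euclidean_space" and w :: "'i \<Rightarrow> 'a" and u :: "'j \<Rightarrow> 'a"
  assumes T: "subspace T" "v \<in> T" "\<forall>i\<in>I. w i \<in> T" "\<forall>j\<in>A. u j \<in> T"
    and "finite I" "finite A"
    and m: "\<bar>Inf {v \<bullet> d | d. d \<in> T \<and> (\<forall>i\<in>I. w i \<bullet> d = 0) \<and> (\<forall>j\<in>A. u j \<bullet> d \<le> 0) \<and> norm d \<le> 1}\<bar> \<le> \<epsilon>"
  obtains a b where "\<forall>j\<in>A. 0 \<le> b j" "norm (v + (\<Sum>i\<in>I. a i *\<^sub>R w i) + (\<Sum>j\<in>A. b j *\<^sub>R u j)) \<le> \<epsilon>"
proof -
  let ?S = "{v \<bullet> d | d. d \<in> T \<and> (\<forall>i\<in>I. w i \<bullet> d = 0) \<and> (\<forall>j\<in>A. u j \<bullet> d \<le> 0) \<and> norm d \<le> 1}"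
  define K where "K = convex_cone hull (w ` I \<union> (\<lambda>i. - w i) ` I \<union> u ` A)"
  have "closed K"
    unfolding K_def using \<open>finite I\<close> \<open>finite A\<close> by (simp add: closed_convex_cone_hull)
  moreover have "convex_cone K"
    unfolding K_def by (rule convex_cone_convex_cone_hull)
  moreover have "K \<subseteq> T"
    unfolding K_def using T by (intro hull_minimal) (auto simp: subspace_imp_convex_cone subspace_neg)
  ultimately obtain k d where "k \<in> K" "d \<in> T" "norm d \<le> 1"
    and polar: "\<forall>x\<in>K. x \<bullet> d \<le> 0" and vd: "v \<bullet> d = - norm (v + k)"
    using exists_polar_direction[OF _ _ T(1) _ T(2)] by blast
  have gen: "x \<bullet> d \<le> 0" if "x \<in> w ` I \<union> (\<lambda>i. - w i) ` I \<union> u ` A" for x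
    using polar hull_inc[OF that] unfolding K_def by blast
  have "w i \<bullet> d = 0" if "i \<in> I" for i
    using gen[of "w i"] gen[of "- w i"] that by simp
  moreover have "u j \<bullet> d \<le> 0" if "j \<in> A" for j
    using gen[of "u j"] that by simp
  ultimately have "v \<bullet> d \<in> ?S"
    using \<open>d \<in> T\<close> \<open>norm d \<le> 1\<close> by (intro CollectI exI[of _ d]) simp
  then have "Inf ?S \<le> v \<bullet> d"
    by (rule cInf_lower) (rule bdd_below_inner_unit_ball, blast)
  then have "norm (v + k) \<le> \<epsilon>"
    using vd m by linarith
  moreover obtain a b where "\<forall>j\<in>A. 0 \<le> b j" "k = (\<Sum>i\<in>I. a i *\<^sub>R w i) + (\<Sum>j\<in>A. b j *\<^sub>R u j)"
    using convex_cone_hull_subset_multiplier_combinations[OF \<open>finite I\<close> \<open>finite A\<close>] \<open>k \<in> K\<close>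
    unfolding K_def multiplier_combinations_def by blast
  ultimately show thesis
    using that by (simp add: add.assoc)
qed

lemma active_multipliers_extend:
  fixes u :: "nat \<Rightarrow> 'a::real_vector"
  assumes "\<forall>j\<in>active_set g s y. 0 \<le> b j"
  obtains \<mu> where "\<forall>j<s. 0 \<le> \<mu> j" "\<forall>j<s. \<mu> j * g j y = 0"
    "(\<Sum>j<s. \<mu> j *\<^sub>R u j) = (\<Sum>j\<in>active_set g s y. b j *\<^sub>R u j)"
proof
  let ?\<mu> = "\<lambda>j. if j \<in> active_set g s y then b j else 0"
  show "\<forall>j<s. 0 \<le> ?\<mu> j" "\<forall>j<s. ?\<mu> j * g j y = 0"
    using assms by (auto simp: active_set_def)
  show "(\<Sum>j<s. ?\<mu> j *\<^sub>R u j) = (\<Sum>j\<in>active_set g s y. b j *\<^sub>R u j)"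
    by (rule sum.mono_neutral_cong_right) (auto simp: active_set_def)
qed

lemma eps_stationary_if_measures_le:
  fixes M :: "'e::euclidean_space set" and f :: "'e \<times> (real^'n) \<Rightarrow> real"
  assumes "submanifold M" and feas: "feasible M c p g s x y"
    and f: "f differentiable (at (x, y))" and c: "\<forall>i<p. c i differentiable (at (x, y))"
    and "m_x M f c p x y \<le> \<epsilon>" "m_y f c p g s x y \<le> \<epsilon>"
  shows "eps_stationary \<epsilon> M f c p g s x y"
proof -
  have TM: "subspace (tangent_space M x)"
    using subspace_tangent_space[OF assms(1)] feas by (simp add: feasible_def)
  obtain lam where lam:
    "norm (rgrad M (\<lambda>u. f (u, y)) x + (\<Sum>i<p. lam i *\<^sub>R rgrad M (\<lambda>u. c i (u, y)) x)) \<le> \<epsilon>"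
    by (rule Farkas_multipliers[OF TM, where I="{..<p}" and A="{}" and u="\<lambda>_. 0"
          and v="rgrad M (\<lambda>u. f (u, y)) x" and w="\<lambda>i. rgrad M (\<lambda>u. c i (u, y)) x"])
      (use assms(5) c f rgrad_in_tangent_space[OF TM differentiable_comp_Pair]
        in \<open>auto simp: m_x_def Ball_def\<close>)
  obtain lam' b where b: "\<forall>j\<in>active_set g s y. 0 \<le> b j"
    and lam': "norm (egrad (\<lambda>v. f (x, v)) y + (\<Sum>i<p. lam' i *\<^sub>R egrad (\<lambda>v. c i (x, v)) y)
      + (\<Sum>j\<in>active_set g s y. b j *\<^sub>R egrad (g j) y)) \<le> \<epsilon>"
    by (rule Farkas_multipliers[OF subspace_UNIV, where I="{..<p}" and A="active_set g s y"
          and u="\<lambda>j. egrad (g j) y" and v="egrad (\<lambda>v. f (x, v)) y"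
          and w="\<lambda>i. egrad (\<lambda>v. c i (x, v)) y"])
      (use assms(6) in \<open>auto simp: m_y_def Ball_def active_set_def\<close>)
  obtain \<mu> where "\<forall>j<s. 0 \<le> \<mu> j" "\<forall>j<s. \<mu> j * g j y = 0"
    "(\<Sum>j<s. \<mu> j *\<^sub>R egrad (g j) y) = (\<Sum>j\<in>active_set g s y. b j *\<^sub>R egrad (g j) y)"
    by (rule active_multipliers_extend[OF b])
  with feas lam lam' show ?thesis
    unfolding eps_stationary_def by (intro conjI exI[of _ lam] exI[of _ lam'] exI[of _ \<mu>]) auto
qed

lemma eps_KKT_if_m_KKT_le:
  fixes M :: "'e::euclidean_space set" and f :: "'e \<times> (real^'n) \<Rightarrow> real"
  assumes "submanifold M" and feas: "feasible M c p g s x y"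
    and f: "f differentiable (at (x, y))" and c: "\<forall>i<p. c i differentiable (at (x, y))"
    and g: "\<forall>j<s. g j differentiable (at y)"
    and "m_KKT M f c p g s x y \<le> \<epsilon>"
  shows "eps_KKT \<epsilon> M f c p g s x y"
proof -
  have "subspace (tangent_space M x)"
    using subspace_tangent_space[OF assms(1)] feas by (simp add: feasible_def)
  then have T: "subspace (tangent_space (M \<times> UNIV) (x, y))"
    by (simp add: tangent_space_Times_UNIV subspace_Times)
  have gT: "rgrad (M \<times> UNIV) (\<lambda>z. g j (snd z)) (x, y) \<in> tangent_space (M \<times> UNIV) (x, y)"
    if "j \<in> active_set g s y" for j
    using that g by (intro rgrad_in_tangent_space[OF T] differentiable_comp_snd)
      (auto simp: active_set_def)
  obtain lam b where b: "\<forall>j\<in>active_set g s y. 0 \<le> b j"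
    and lam: "norm (rgrad (M \<times> UNIV) f (x, y) + (\<Sum>i<p. lam i *\<^sub>R rgrad (M \<times> UNIV) (c i) (x, y))
      + (\<Sum>j\<in>active_set g s y. b j *\<^sub>R rgrad (M \<times> UNIV) (\<lambda>z. g j (snd z)) (x, y))) \<le> \<epsilon>"
    by (rule Farkas_multipliers[OF T, where I="{..<p}" and A="active_set g s y"
          and u="\<lambda>j. rgrad (M \<times> UNIV) (\<lambda>z. g j (snd z)) (x, y)" and v="rgrad (M \<times> UNIV) f (x, y)"
          and w="\<lambda>i. rgrad (M \<times> UNIV) (c i) (x, y)"])
      (use assms(6) f c gT rgrad_in_tangent_space[OF T]
        in \<open>auto simp: m_KKT_def Ball_def active_set_def\<close>)
  obtain \<mu> where "\<forall>j<s. 0 \<le> \<mu> j" "\<forall>j<s. \<mu> j * g j y = 0"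
    "(\<Sum>j<s. \<mu> j *\<^sub>R rgrad (M \<times> UNIV) (\<lambda>z. g j (snd z)) (x, y))
      = (\<Sum>j\<in>active_set g s y. b j *\<^sub>R rgrad (M \<times> UNIV) (\<lambda>z. g j (snd z)) (x, y))"
    by (rule active_multipliers_extend[OF b])
  with feas lam show ?thesis
    unfolding eps_KKT_def by (intro conjI exI[of _ lam] exI[of _ \<mu>]) auto
qed

theorem proposition4:
  fixes M :: "'e::euclidean_space set"
    and f :: "'e \<times> (real^'n) \<Rightarrow> real"
    and c :: "nat \<Rightarrow> 'e \<times> (real^'n) \<Rightarrow> real" and p :: nat
    and g :: "nat \<Rightarrow> real^'n \<Rightarrow> real" and s :: nat
    and xs :: 'e and ys :: "real^'n" and \<epsilon> :: real
  assumes "submanifold M"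
    and "\<forall>z\<in>M \<times> UNIV. f differentiable (at z)"
    and "\<forall>i<p. \<forall>z\<in>M \<times> UNIV. c i differentiable (at z)"
    and "\<forall>j<s. \<forall>y. g j differentiable (at y)"
    and "xs \<in> M" and "\<forall>i<p. c i (xs, ys) = 0" and "\<forall>j<s. g j ys \<le> 0"
    and "LICQ M c p g s xs ys"
    and "\<epsilon> \<ge> 0"
  shows "(max (m_x M f c p xs ys) (m_y f c p g s xs ys) \<le> \<epsilon> \<longrightarrow> eps_stationary \<epsilon> M f c p g s xs ys)
       \<and> (m_KKT M f c p g s xs ys \<le> \<epsilon> \<longrightarrow> eps_KKT \<epsilon> M f c p g s xs ys)"
proof -
  have feas: "feasible M c p g s xs ys"
    using assms(5-7) by (simp add: feasible_def)
  have f: "f differentiable (at (xs, ys))" and c: "\<forall>i<p. c i differentiable (at (xs, ys))"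
    using assms(2,3,5) by auto
  show ?thesis
    using eps_stationary_if_measures_le[OF assms(1) feas f c]
      eps_KKT_if_m_KKT_le[OF assms(1) feas f c] assms(4)
    by auto
qed

end
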